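(* Let $A$ be a finite set of nonnegative integers with $0\in A$, and suppose $A$ tiles the integers with period $n$, where $n$ has exactly two distinct prime factors $p$ and $q$. If neither $\Phi_p(x)$ nor $\Phi_q(x)$ divides $A(x)=\sum_{a\in A}x^a$, then $A\subset p\mathbb Z$ or $A\subset q\mathbb Z$.
   Context: $A$ tiles the integers with period $n$ means there is $C\subseteq\mathbb Z$ with every integer uniquely $a+c$ ($a\in A$, $c\in C$), such that $n$ is the smallest positive integer with $C+n=C$. $\Phi_p(x)$ is the $p$-th cyclotomic polynomial. *)

theory Defs
  imports "HOL-Computational_Algebra.Computational_Algebra"
begin

definition tiles_with_period :: "int set \<Rightarrow> nat \<Rightarrow> bool" where
  "tiles_with_period A n \<longleftrightarrow>
     (\<exists>C :: int set.
        (\<forall>z :: int. \<exists>!(a, c). a \<in> A \<and> c \<in> C \<and> z = a + c) \<and>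
        n > 0 \<and> (\<lambda>c. c + int n) ` C = C \<and>
        (\<forall>m. 0 < m \<and> m < n \<longrightarrow> (\<lambda>c. c + int m) ` C \<noteq> C))"

definition mask_poly :: "nat set \<Rightarrow> int poly" where
  "mask_poly A = (\<Sum>a\<in>A. monom 1 a)"

definition cyclotomic_prime :: "nat \<Rightarrow> int poly" where
  "cyclotomic_prime p = (\<Sum>i<p. monom 1 i)"

end

theory Submission
  imports Defs "HOL-Number_Theory.Cong"
begin

(* A tiling A + C = Z of period n is a tiling of Z/nZ by A and the residues of C. By Tijdeman's
   theorem tA + C is again a tiling of Z/nZ for every t coprime to n: if a prime r does not divide
   |A|, then A(x)^r == A(x^r) (mod r) gives A(x^r) C(x) == |A|^(r-1) (1 + x + ... + x^(n-1)) modulo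
   r and x^n - 1, so every residue is represented a nonzero number of times, hence exactly once.
   Consequently A - A and C - C cannot both contain a unit of Z/nZ: if a1 - a2 and c1 - c2 are
   units, then t = (c1 - c2)/(a1 - a2) gives t a1 + c2 = t a2 + c1 in Z/nZ. As p and q are the only
   prime factors of n, a set without unit differences lies in one residue class mod p or mod q.
   For A, which contains 0, this is the claim; for C it would make A equidistributed mod p (or q),
   forcing Phi_p (or Phi_q) to divide A(x). *)

lemma xn_minus_1_dvd_monom_diff_mod:
  "(monom 1 n - 1) dvd (monom (1::'a::comm_ring_1) k - monom 1 (k mod n))"
proof -
  have "monom (1::'a) k - monom 1 (k mod n) = monom 1 (k mod n) * (monom 1 n ^ (k div n) - 1)"
    by (simp add: monom_power mult_monom algebra_simps)
  moreover have "(monom 1 n - 1) dvd (monom (1::'a) n ^ (k div n) - 1)"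
    by (simp add: power_diff_1_eq)
  ultimately show ?thesis
    by simp
qed

lemma exists_reduced_mod_xn_minus_1:
  fixes f :: "'a::comm_ring_1 poly"
  assumes "n > 0"
  obtains g where "degree g < n" and "(monom 1 n - 1) dvd (f - g)"
proof
  define g where "g = (\<Sum>i\<le>degree f. monom (coeff f i) (i mod n))"
  show "degree g < n"
    unfolding g_def using assms
    by (intro degree_sum_less) (auto intro: le_less_trans[OF degree_monom_le])
  have "f - g = (\<Sum>i\<le>degree f. smult (coeff f i) (monom 1 i - monom 1 (i mod n)))"
    by (simp add: g_def smult_monom smult_diff_right sum_subtractf poly_as_sum_of_monoms)
  then show "(monom 1 n - 1) dvd (f - g)"
    by (simp add: dvd_sum dvd_smult xn_minus_1_dvd_monom_diff_mod)
qed

lemma xn_minus_1_dvd_imp_eq_0: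
  fixes f :: "'a::idom poly"
  assumes "degree f < n" and "(monom 1 n - 1) dvd f"
  shows "f = 0"
proof (rule ccontr)
  assume "f \<noteq> 0"
  have "degree (monom (1::'a) n - 1) = n"
    using degree_add_eq_left[of "- 1" "monom (1::'a) n"] assms(1) by (simp add: degree_monom_eq)
  then show False
    using dvd_imp_degree_le[OF assms(2) \<open>f \<noteq> 0\<close>] assms(1) by simp
qed

lemma coeff_cong_if_xn_minus_1_dvd:
  fixes f g h :: "int poly"
  assumes "degree f < n" and "degree g < n"
    and "(monom 1 n - 1) dvd (f - g - smult m h)"
  shows "[coeff f i = coeff g i] (mod m)"
proof -
  obtain h' where h': "degree h' < n" "(monom 1 n - 1) dvd (h - h')"
    using exists_reduced_mod_xn_minus_1 assms(1) by (metis gr_zeroI not_less_zero)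
  have "f - g - smult m h' = (f - g - smult m h) + smult m (h - h')"
    by (simp add: algebra_simps smult_diff_right)
  then have "(monom 1 n - 1) dvd (f - g - smult m h')"
    using assms(3) h'(2) by (metis dvd_add dvd_smult)
  moreover have "degree (f - g - smult m h') < n"
    using assms(1,2) h'(1) by (intro degree_diff_less) (auto intro: le_less_trans[OF degree_smult_le])
  ultimately have "f - g - smult m h' = 0"
    by (rule xn_minus_1_dvd_imp_eq_0[rotated])
  then have "coeff f i - coeff g i = m * coeff h' i"
    by (metis coeff_diff coeff_smult coeff_0 eq_iff_diff_eq_0)
  then show ?thesis
    by (simp add: cong_iff_dvd_diff)
qed

lemma xn_minus_1_dvd_sum_monom_minus_fibre_counts:
  assumes "n > 0" and "finite S"
  shows "(monom 1 n - 1) dvd ((\<Sum>x\<in>S. monom (1::int) (g x))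
           - (\<Sum>i<n. monom (int (card {x\<in>S. g x mod n = i})) i))"
proof -
  have "(\<Sum>i<n. monom (int (card {x\<in>S. g x mod n = i})) i)
      = (\<Sum>i<n. \<Sum>x\<in>{x\<in>S. g x mod n = i}. monom 1 (g x mod n))"
    by (intro sum.cong refl) (simp add: monom_sum[symmetric] of_nat_mult_conv_smult smult_monom)
  also have "\<dots> = (\<Sum>x\<in>S. monom 1 (g x mod n))"
    by (rule sum.group) (use assms in auto)
  finally show ?thesis
    by (simp add: sum_subtractf[symmetric] dvd_sum xn_minus_1_dvd_monom_diff_mod)
qed

section \<open>The Frobenius congruence\<close>

lemma prime_dvd_power_add_minus_powers:
  fixes x y :: "'a::comm_ring_1"
  assumes "prime r"
  shows "of_nat r dvd ((x + y) ^ r - x ^ r - y ^ r)"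
proof -
  have r0: "r > 0"
    using assms prime_gt_0_nat by blast
  have split: "{..r} = insert 0 (insert r {1..<r})"
    using r0 by auto
  have "(x + y) ^ r = (\<Sum>k\<le>r. of_nat (r choose k) * x ^ k * y ^ (r - k))"
    by (simp add: binomial_ring)
  also have "\<dots> = y ^ r + x ^ r + (\<Sum>k\<in>{1..<r}. of_nat (r choose k) * x ^ k * y ^ (r - k))"
    using r0 by (simp add: split)
  finally have expand: "(x + y) ^ r - x ^ r - y ^ r
      = (\<Sum>k\<in>{1..<r}. of_nat (r choose k) * x ^ k * y ^ (r - k))"
    by simp
  have "of_nat r dvd (of_nat (r choose k) :: 'a)" if "k \<in> {1..<r}" for k
    using dvd_choose_prime[OF _ _ _ assms, of k] that by (auto elim!: dvdE)
  then show ?thesis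
    unfolding expand by (intro dvd_sum) (simp add: mult.assoc)
qed

lemma prime_dvd_sum_power_minus_sum_powers:
  fixes f :: "'b \<Rightarrow> 'a::comm_ring_1"
  assumes "prime r"
  shows "of_nat r dvd ((\<Sum>a\<in>A. f a) ^ r - (\<Sum>a\<in>A. f a ^ r))"
proof (induction A rule: infinite_finite_induct)
  case (insert a A)
  have "(\<Sum>b\<in>insert a A. f b) ^ r - (\<Sum>b\<in>insert a A. f b ^ r)
      = ((f a + sum f A) ^ r - f a ^ r - sum f A ^ r) + (sum f A ^ r - (\<Sum>b\<in>A. f b ^ r))"
    using insert.hyps by simp
  then show ?case
    using prime_dvd_power_add_minus_powers[OF assms] insert.IH by (metis dvd_add)
qed (use prime_gt_0_nat[OF assms] in \<open>simp_all add: zero_power\<close>)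

lemma mask_poly_dilate:
  assumes "k > 0"
  shows "mask_poly ((*) k ` A) = (\<Sum>a\<in>A. monom 1 a ^ k)"
proof -
  have "inj_on ((*) k) A"
    using assms by (auto intro: inj_onI)
  then show ?thesis
    by (simp add: mask_poly_def sum.reindex monom_power) (simp add: ac_simps)
qed

lemma poly_mask_poly_1: "poly (mask_poly A) 1 = int (card A)"
  by (cases "finite A") (simp_all add: mask_poly_def poly_sum poly_monom)

lemma xn_minus_1_dvd_mult_mask_lessThan:
  "(monom 1 n - 1) dvd (f * mask_poly {..<n} - smult (poly f 1) (mask_poly {..<n}))"
proof (induction f)
  case 0
  then show ?case by simp
next
  case (pCons a f)
  define S where "S = mask_poly {..<n}"
  have shift: "monom 1 1 * S - S = monom 1 n - 1"
    using power_diff_1_eq[of "monom (1::int) 1" n]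
    by (simp add: S_def mask_poly_def monom_power algebra_simps)
  have "pCons 0 p = monom 1 1 * p" for p :: "int poly"
    by (simp add: monom_Suc monom_0)
  then have "pCons a f * S - smult (poly (pCons a f) 1) S
      = monom 1 1 * (f * S - smult (poly f 1) S) + smult (poly f 1) (monom 1 1 * S - S)"
    by (simp add: algebra_simps smult_diff_right smult_add_left)
  then show ?case
    using pCons.IH shift unfolding S_def[symmetric] by (simp add: dvd_smult)
qed

lemma cyclotomic_prime_dvd_xp_minus_1: "cyclotomic_prime p dvd (monom 1 p - 1)"
  using power_diff_1_eq[of "monom (1::int) 1" p]
  by (simp add: cyclotomic_prime_def monom_power)

lemma cyclotomic_prime_dvd_mask_poly_if_equidistributed:
  assumes "p > 0" and "finite A" and "\<forall>s<p. card {a \<in> A. a mod p = s} = k"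
  shows "cyclotomic_prime p dvd mask_poly A"
proof -
  have "(\<Sum>i<p. monom (int (card {a \<in> A. a mod p = i})) i) = of_nat k * cyclotomic_prime p"
    using assms(3) by (simp add: cyclotomic_prime_def sum_distrib_left of_nat_mult_conv_smult smult_monom)
  then have "cyclotomic_prime p dvd (mask_poly A - of_nat k * cyclotomic_prime p)"
    using xn_minus_1_dvd_sum_monom_minus_fibre_counts[OF assms(1,2), of "\<lambda>a. a"]
      cyclotomic_prime_dvd_xp_minus_1 dvd_trans
    unfolding mask_poly_def by metis
  then show ?thesis
    by (metis dvd_add dvd_mult dvd_refl diff_add_cancel)
qed

section \<open>Tilings of the cyclic group of order n\<close>

definition rep_count :: "nat \<Rightarrow> nat set \<Rightarrow> nat set \<Rightarrow> nat \<Rightarrow> nat" where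
  "rep_count n A C i = card {x \<in> A \<times> C. (fst x + snd x) mod n = i}"

definition tiles_mod :: "nat \<Rightarrow> nat set \<Rightarrow> nat set \<Rightarrow> bool" where
  "tiles_mod n A C \<longleftrightarrow> finite A \<and> finite C \<and> (\<forall>i<n. rep_count n A C i = 1)"

lemma sum_rep_count:
  assumes "n > 0" and "finite A" and "finite C"
  shows "(\<Sum>i<n. rep_count n A C i) = card A * card C"
proof -
  have "(\<Sum>i<n. rep_count n A C i) = (\<Sum>i<n. \<Sum>x\<in>{x \<in> A \<times> C. (fst x + snd x) mod n = i}. 1)"
    by (simp add: rep_count_def)
  also have "\<dots> = (\<Sum>x\<in>A \<times> C. 1)"
    by (rule sum.group) (use assms in auto)
  finally show ?thesis
    by (simp add: card_cartesian_product)
qed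

lemma tiles_mod_card:
  assumes "n > 0" and "tiles_mod n A C"
  shows "card A * card C = n"
proof -
  have "finite A" and "finite C"
    using assms(2) by (auto simp: tiles_mod_def)
  then have "card A * card C = (\<Sum>i<n. rep_count n A C i)"
    using sum_rep_count[OF assms(1)] by simp
  also have "\<dots> = (\<Sum>i<n. 1)"
    using assms(2) unfolding tiles_mod_def by (intro sum.cong) auto
  finally show ?thesis
    by simp
qed

lemma tiles_mod_unique:
  assumes n: "n > 0" and T: "tiles_mod n A C"
    and "a \<in> A" "a' \<in> A" "c \<in> C" "c' \<in> C" and "[a + c = a' + c'] (mod n)"
  shows "a = a' \<and> c = c'"
proof -
  define i where "i = (a + c) mod n"
  have "card {x \<in> A \<times> C. (fst x + snd x) mod n = i} = 1"
    using T n by (simp add: tiles_mod_def rep_count_def i_def)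
  then obtain x where "{x \<in> A \<times> C. (fst x + snd x) mod n = i} = {x}"
    by (rule card_1_singletonE)
  moreover have "(a, c) \<in> {x \<in> A \<times> C. (fst x + snd x) mod n = i}"
    and "(a', c') \<in> {x \<in> A \<times> C. (fst x + snd x) mod n = i}"
    using assms(3-7) by (auto simp: i_def cong_def)
  ultimately show ?thesis
    by auto
qed

lemma card_lessThan_mod_eq:
  assumes "m dvd n" and "R < m"
  shows "card {i \<in> {..<n}. i mod m = R} = n div m"
proof -
  have n: "n div m * m = n"
    using assms(1) by simp
  have "{i \<in> {..<n}. i mod m = R} = (\<lambda>j. j * m + R) ` {..<n div m}"
  proof (intro set_eqI iffI)
    fix i
    assume i: "i \<in> {i \<in> {..<n}. i mod m = R}"
    then have "i = i div m * m + R"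
      using div_mult_mod_eq[of i m] by simp
    moreover have "i div m < n div m"
      using i n by (intro less_mult_imp_div_less) simp
    ultimately show "i \<in> (\<lambda>j. j * m + R) ` {..<n div m}"
      by blast
  next
    fix i
    assume "i \<in> (\<lambda>j. j * m + R) ` {..<n div m}"
    then obtain j where j: "j < n div m" and i: "i = j * m + R"
      by blast
    have "j * m + R < Suc j * m"
      using assms(2) by simp
    also have "\<dots> \<le> n"
      using j n by (metis Suc_leI mult_le_mono1)
    finally show "i \<in> {i \<in> {..<n}. i mod m = R}"
      using assms(2) i by simp
  qed
  moreover have "inj_on (\<lambda>j. j * m + R) {..<n div m}"
    using assms(2) by (auto intro: inj_onI)
  ultimately show ?thesis
    by (simp add: card_image)
qed

lemma tiles_mod_count_mod_divisor:
  assumes n: "n > 0" and T: "tiles_mod n A C" and "m dvd n" and "R < m"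
  shows "card {x \<in> A \<times> C. (fst x + snd x) mod m = R} = n div m"
proof -
  define X where "X = {x \<in> A \<times> C. (fst x + snd x) mod m = R}"
  define I where "I = {i \<in> {..<n}. i mod m = R}"
  have fin: "finite A" "finite C"
    using T by (auto simp: tiles_mod_def)
  have mod_n_mod_m: "(k mod n) mod m = k mod m" for k
    using assms(3) by (simp add: mod_mod_cancel)
  have "card X = (\<Sum>x\<in>X. 1)"
    by simp
  also have "\<dots> = (\<Sum>i\<in>I. \<Sum>x\<in>{x \<in> X. (fst x + snd x) mod n = i}. 1)"
    by (rule sum.group[symmetric]) (use fin n in \<open>auto simp: X_def I_def mod_n_mod_m\<close>)
  also have "\<dots> = (\<Sum>i\<in>I. rep_count n A C i)"
    by (intro sum.cong refl)
      (auto simp: X_def I_def rep_count_def mod_n_mod_m intro: arg_cong[where f = card])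
  also have "\<dots> = card I"
    using T by (simp add: tiles_mod_def I_def)
  finally show ?thesis
    using card_lessThan_mod_eq[OF assms(3,4)] by (simp add: X_def I_def)
qed

lemma tiles_mod_one_class_imp_cyclotomic_dvd:
  assumes n: "n > 0" and T: "tiles_mod n A C" and m: "m dvd n"
    and c0: "c0 \<in> C" and one_class: "\<forall>c\<in>C. [c = c0] (mod m)"
  shows "cyclotomic_prime m dvd mask_poly A"
proof -
  have "m > 0"
    using m n by (auto intro: Nat.gr0I)
  have fin: "finite A" "finite C"
    using T by (auto simp: tiles_mod_def)
  have "card C > 0"
    using c0 fin(2) card_gt_0_iff by blast
  have "card {a \<in> A. a mod m = s} * card C = n div m" if "s < m" for s
  proof -
    have "[a + c = s + c0] (mod m) \<longleftrightarrow> a mod m = s" if "c \<in> C" for a c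
    proof -
      have "[a + c = a + c0] (mod m)"
        using one_class that by (simp add: cong_add_lcancel_nat)
      then have "[a + c = s + c0] (mod m) \<longleftrightarrow> [a = s] (mod m)"
        by (metis cong_add_rcancel_nat cong_sym cong_trans)
      then show ?thesis
        using \<open>s < m\<close> by (simp add: cong_def)
    qed
    then have "{x \<in> A \<times> C. (fst x + snd x) mod m = (s + c0) mod m} = {a \<in> A. a mod m = s} \<times> C"
      unfolding cong_def by auto
    then show ?thesis
      using tiles_mod_count_mod_divisor[OF n T m, of "(s + c0) mod m"] \<open>m > 0\<close>
      by (simp add: card_cartesian_product)
  qed
  then have "\<forall>s<m. card {a \<in> A. a mod m = s} = n div m div card C"
    using \<open>card C > 0\<close> by (metis nonzero_mult_div_cancel_right not_gr0)
  then show ?thesis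
    using cyclotomic_prime_dvd_mask_poly_if_equidistributed \<open>m > 0\<close> fin(1) by blast
qed

section \<open>Tijdeman's dilation theorem\<close>

lemma xn_minus_1_dvd_mask_mult_minus_rep_counts:
  assumes "n > 0" and "finite A" and "finite C"
  shows "(monom 1 n - 1) dvd
           (mask_poly A * mask_poly C - (\<Sum>i<n. monom (int (rep_count n A C i)) i))"
proof -
  have "mask_poly A * mask_poly C = (\<Sum>x\<in>A \<times> C. monom 1 (fst x + snd x))"
    by (simp add: mask_poly_def sum_product sum.cartesian_product mult_monom case_prod_beta)
  then show ?thesis
    using xn_minus_1_dvd_sum_monom_minus_fibre_counts[of n "A \<times> C" "\<lambda>x. fst x + snd x"] assms
    by (simp add: rep_count_def)
qed

lemma tiles_mod_mask_poly:
  assumes "n > 0" and "tiles_mod n A C"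
  shows "(monom 1 n - 1) dvd (mask_poly A * mask_poly C - mask_poly {..<n})"
  using xn_minus_1_dvd_mask_mult_minus_rep_counts[OF assms(1), of A C] assms(2)
  by (simp add: tiles_mod_def mask_poly_def)

lemma tiles_mod_mask_poly_power:
  assumes "n > 0" and "tiles_mod n A C"
  shows "(monom 1 n - 1) dvd
           (mask_poly A ^ Suc k * mask_poly C - smult (int (card A) ^ k) (mask_poly {..<n}))"
proof (induction k)
  case 0
  then show ?case
    using tiles_mod_mask_poly[OF assms] by simp
next
  case (Suc k)
  define P Q S where "P = mask_poly A" and "Q = mask_poly C" and "S = mask_poly {..<n}"
  have "P ^ Suc (Suc k) * Q - smult (int (card A) ^ Suc k) S
      = P * (P ^ Suc k * Q - smult (int (card A) ^ k) S)
        + smult (int (card A) ^ k) (P * S - smult (poly P 1) S)"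
    by (simp add: P_def poly_mask_poly_1 algebra_simps smult_diff_right)
  then show ?case
    using Suc.IH xn_minus_1_dvd_mult_mask_lessThan[of n P]
    unfolding P_def Q_def S_def by (metis dvd_add dvd_mult dvd_smult)
qed

lemma rep_count_dilate_cong:
  assumes n: "n > 0" and T: "tiles_mod n A C" and r: "prime r" and i: "i < n"
  shows "[int (rep_count n ((*) r ` A) C i) = int (card A) ^ (r - 1)] (mod int r)"
proof -
  have fin: "finite A" "finite C"
    using T by (auto simp: tiles_mod_def)
  have r0: "r > 0"
    using r prime_gt_0_nat by blast
  define P Q S where "P = mask_poly A" and "Q = mask_poly C" and "S = mask_poly {..<n}"
  define c where "c = int (card A) ^ (r - 1)"
  define N where "N = (\<Sum>j<n. monom (int (rep_count n ((*) r ` A) C j)) j)"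
  have "of_nat r dvd (P ^ r - mask_poly ((*) r ` A))"
    using prime_dvd_sum_power_minus_sum_powers[OF r, of "monom 1" A]
    unfolding P_def mask_poly_dilate[OF r0] by (simp only: mask_poly_def)
  then obtain H where "P ^ r - mask_poly ((*) r ` A) = smult (int r) H"
    by (auto simp: of_nat_mult_conv_smult elim!: dvdE)
  then have H: "P ^ r = mask_poly ((*) r ` A) + smult (int r) H"
    by (simp add: diff_eq_eq add.commute)
  have "(monom 1 n - 1) dvd ((P ^ Suc (r - 1) * Q - smult c S) - (mask_poly ((*) r ` A) * Q - N))"
    unfolding P_def Q_def S_def c_def N_def using fin
    by (intro dvd_diff tiles_mod_mask_poly_power[OF n T] xn_minus_1_dvd_mask_mult_minus_rep_counts[OF n]) auto
  also have "(P ^ Suc (r - 1) * Q - smult c S) - (mask_poly ((*) r ` A) * Q - N)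
      = N - smult c S - smult (int r) (- H * Q)"
    using r0 by (simp add: H algebra_simps)
  finally have "(monom 1 n - 1) dvd (N - smult c S - smult (int r) (- H * Q))" .
  moreover have "degree N < n" and "degree (smult c S) < n"
    unfolding N_def S_def mask_poly_def using n
    by (auto intro!: degree_sum_less le_less_trans[OF degree_smult_le] le_less_trans[OF degree_monom_le])
  ultimately have "[coeff N i = coeff (smult c S) i] (mod int r)"
    by (intro coeff_cong_if_xn_minus_1_dvd)
  then show ?thesis
    using i by (simp add: N_def S_def c_def mask_poly_def coeff_sum)
qed

lemma tiles_mod_dilate_prime:
  assumes n: "n > 0" and T: "tiles_mod n A C" and r: "prime r" and "\<not> r dvd card A"
  shows "tiles_mod n ((*) r ` A) C"
proof -
  have fin: "finite A" "finite C"
    using T by (auto simp: tiles_mod_def)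
  have card: "card ((*) r ` A) = card A"
    using r prime_gt_0_nat by (intro card_image) (auto intro: inj_onI)
  have pos: "1 \<le> rep_count n ((*) r ` A) C i" if "i < n" for i
  proof (rule ccontr)
    assume "\<not> ?thesis"
    then have "rep_count n ((*) r ` A) C i = 0"
      by simp
    then have "[int (card A) ^ (r - 1) = 0] (mod int r)"
      using rep_count_dilate_cong[OF n T r that] by (simp add: cong_sym_eq)
    then have "r dvd card A ^ (r - 1)"
      by (simp add: cong_0_iff flip: of_nat_power)
    then show False
      using assms(4) prime_dvd_power r by blast
  qed
  have "(\<Sum>i<n. rep_count n ((*) r ` A) C i - 1) = (\<Sum>i<n. rep_count n ((*) r ` A) C i) - n"
    using pos sum_subtractf_nat[of "{..<n}" "\<lambda>_. 1" "rep_count n ((*) r ` A) C"] by simp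
  also have "\<dots> = 0"
    using sum_rep_count[OF n] fin tiles_mod_card[OF n T] card by simp
  finally have "\<forall>i<n. rep_count n ((*) r ` A) C i = 1"
    using pos by (simp add: le_antisym)
  then show ?thesis
    using fin by (simp add: tiles_mod_def)
qed

lemma tiles_mod_dilate_coprime:
  assumes n: "n > 0" and T: "tiles_mod n A C" and "t > 0" and "coprime t n"
  shows "tiles_mod n ((*) t ` A) C"
  using assms(3,4)
proof (induction t rule: less_induct)
  case (less t)
  show ?case
  proof (cases "t = 1")
    case True
    then show ?thesis
      using T by simp
  next
    case False
    then obtain r where r: "prime r" and "r dvd t"
      using prime_factor_nat by blast
    then obtain t' where t: "t = r * t'"
      by (elim dvdE)
    have "0 < t'" and "t' < t" and "coprime t' n"
      using less.prems t prime_gt_1_nat[OF r] by auto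
    then have T': "tiles_mod n ((*) t' ` A) C"
      using less.IH by blast
    have "\<not> r dvd n"
      using less.prems(2) r t by (metis coprime_common_divisor dvd_mult2 dvd_refl not_prime_unit)
    moreover have "card ((*) t' ` A) dvd n"
      using tiles_mod_card[OF n T'] by (metis dvd_triv_left)
    ultimately have "tiles_mod n ((*) r ` (*) t' ` A) C"
      by (intro tiles_mod_dilate_prime[OF n T' r]) (auto dest: dvd_trans)
    then show ?thesis
      by (simp add: t image_image mult.assoc)
  qed
qed

lemma add_multiple_mem_if_translation_invariant:
  fixes C :: "int set"
  assumes invariant: "(\<lambda>c. c + d) ` C = C" and "c \<in> C"
  shows "c + k * d \<in> C"
proof (induction k rule: int_induct[where k = 0])
  case base
  then show ?case
    using assms(2) by simp
next
  case (step1 i)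
  then have "c + i * d + d \<in> C"
    using invariant by blast
  then show ?case
    by (simp add: algebra_simps)
next
  case (step2 i)
  then obtain c' where "c' \<in> C" and "c + i * d = c' + d"
    using invariant by (metis imageE)
  then show ?case
    by (simp add: algebra_simps)
qed

lemma translation_invariant_mod_rep:
  fixes C :: "int set"
  assumes n: "n > 0" and invariant: "(\<lambda>c. c + int n) ` C = C" and "c \<in> C"
  obtains c' :: nat where "c' < n" and "int c' \<in> C" and "[int c' = c] (mod int n)"
proof
  show "nat (c mod int n) < n"
    using n by (simp add: nat_less_iff)
  have "int (nat (c mod int n)) = c mod int n"
    using n by simp
  also have "\<dots> = c + (- (c div int n)) * int n"
    by (simp add: minus_div_mult_eq_mod[symmetric])
  finally have "int (nat (c mod int n)) = c + (- (c div int n)) * int n" .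
  then show "int (nat (c mod int n)) \<in> C"
    using add_multiple_mem_if_translation_invariant[OF invariant \<open>c \<in> C\<close>] by presburger
  show "[int (nat (c mod int n)) = c] (mod int n)"
    using n by (simp add: cong_def)
qed

lemma translation_invariant_decomposition_mod_unique:
  fixes C :: "int set"
  assumes unique: "\<And>a a' c c'. \<lbrakk>a \<in> A; a' \<in> A; c \<in> C; c' \<in> C; int a + c = int a' + c'\<rbrakk>
      \<Longrightarrow> a = a' \<and> c = c'"
    and invariant: "(\<lambda>c. c + int n) ` C = C"
    and "a \<in> A" "a' \<in> A" "int c \<in> C" "int c' \<in> C" "c < n" "c' < n"
    and "[a + c = a' + c'] (mod n)"
  shows "a = a' \<and> c = c'"
proof -
  have "[int (a' + c') = int (a + c)] (mod int n)"
    using assms(9) by (simp only: cong_int_iff cong_sym_eq)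
  then obtain k where k: "int a + int c = int a' + (int c' + k * int n)"
    by (auto simp: cong_iff_lin algebra_simps)
  moreover have "int c' + k * int n \<in> C"
    using add_multiple_mem_if_translation_invariant[OF invariant \<open>int c' \<in> C\<close>] .
  ultimately have "a = a'" and "int c = int c' + k * int n"
    using unique[OF assms(3,4,5)] by auto
  then have "[int c' = int c] (mod int n)"
    by (auto simp: cong_iff_lin algebra_simps)
  then have "[c = c'] (mod n)"
    by (simp add: cong_int_iff cong_sym_eq)
  then show ?thesis
    using \<open>a = a'\<close> assms(7,8) by (auto intro: cong_less_modulus_unique_nat)
qed

lemma tiles_with_period_imp_tiles_mod:
  assumes "tiles_with_period (int ` A) n" and "finite A"
  shows "n > 0 \<and> (\<exists>C. tiles_mod n A C)"
proof -
  obtain C :: "int set" where decomp: "\<forall>z. \<exists>!(a, c). a \<in> int ` A \<and> c \<in> C \<and> z = a + c"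
    and n: "n > 0" and invariant: "(\<lambda>c. c + int n) ` C = C"
    using assms(1) unfolding tiles_with_period_def by blast
  have unique: "a = a' \<and> c = c'"
    if "a \<in> A" "a' \<in> A" "c \<in> C" "c' \<in> C" "int a + c = int a' + c'" for a a' c c'
  proof -
    obtain w where
      w: "\<And>y. (case y of (x, e) \<Rightarrow> x \<in> int ` A \<and> e \<in> C \<and> int a + c = x + e) \<Longrightarrow> y = w"
      using decomp[rule_format, of "int a + c"] by blast
    have "(int a, c) = w" and "(int a', c') = w"
      by (rule w, use that in auto)+
    then have "(int a, c) = (int a', c')"
      by simp
    then show ?thesis
      by simp
  qed
  define C0 where "C0 = {c. c < n \<and> int c \<in> C}"
  have "rep_count n A C0 i = 1" if "i < n" for i
  proof -
    obtain a c where a: "a \<in> A" and "c \<in> C" and i: "int i = int a + c"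
      using decomp[rule_format, of "int i"] by auto
    then obtain c' where c': "c' \<in> C0" and "[int c' = c] (mod int n)"
      using translation_invariant_mod_rep[OF n invariant] by (metis C0_def mem_Collect_eq)
    then have "[int (a + c') = int i] (mod int n)"
      using i by (simp add: cong_add_lcancel)
    then have "[a + c' = i] (mod n)"
      by (simp only: cong_int_iff)
    then have rep: "(a + c') mod n = i"
      using \<open>i < n\<close> by (simp add: cong_def)
    have "x = (a, c')" if x: "x \<in> {x \<in> A \<times> C0. (fst x + snd x) mod n = i}" for x
    proof -
      obtain a2 c2 where x2: "x = (a2, c2)" and a2: "a2 \<in> A" and c2: "c2 \<in> C0"
        and "[a2 + c2 = a + c'] (mod n)"
        using x rep by (auto simp: cong_def)
      moreover have "int c2 \<in> C" "int c' \<in> C" "c2 < n" "c' < n"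
        using c2 c' by (simp_all add: C0_def)
      ultimately have "a2 = a \<and> c2 = c'"
        using translation_invariant_decomposition_mod_unique[OF unique invariant a2 a] by blast
      then show ?thesis
        using x2 by simp
    qed
    moreover have "(a, c') \<in> {x \<in> A \<times> C0. (fst x + snd x) mod n = i}"
      using a c' rep by simp
    ultimately have "{x \<in> A \<times> C0. (fst x + snd x) mod n = i} = {(a, c')}"
      by blast
    then show ?thesis
      by (simp add: rep_count_def)
  qed
  moreover have "finite C0"
    by (simp add: C0_def)
  ultimately show ?thesis
    using n assms(2) by (auto simp: tiles_mod_def)
qed

section \<open>Unit differences\<close>

lemma one_class_if_differences_dvd_either:
  fixes P Q :: "'a::comm_ring_1"
  assumes "\<forall>x\<in>X. \<forall>y\<in>X. P dvd (x - y) \<or> Q dvd (x - y)" and "x0 \<in> X"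
  shows "(\<forall>x\<in>X. P dvd (x - x0)) \<or> (\<forall>x\<in>X. Q dvd (x - x0))"
proof (rule ccontr)
  assume "\<not> ?thesis"
  then obtain x y where "x \<in> X" "y \<in> X" and x: "\<not> P dvd (x - x0)" and y: "\<not> Q dvd (y - x0)"
    by blast
  then have "Q dvd (x - x0)" and "P dvd (y - x0)" and "P dvd (x - y) \<or> Q dvd (x - y)"
    using assms by blast+
  moreover have "x - x0 = (x - y) + (y - x0)" and "y - x0 = (x - x0) - (x - y)"
    by simp_all
  ultimately show False
    using x y by (metis dvd_add dvd_diff)
qed

lemma coprime_if_not_dvd_prime_factors:
  fixes x :: int
  assumes "n > 0" and "\<forall>r\<in>prime_factors n. \<not> int r dvd x"
  shows "coprime x (int n)"
proof (rule ccontr)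
  assume "\<not> coprime x (int n)"
  then have "nat (gcd x (int n)) \<noteq> 1"
    by (simp add: coprime_iff_gcd_eq_1)
  then obtain r where "prime r" and "r dvd nat (gcd x (int n))"
    using prime_factor_nat by blast
  then have "int r dvd x" and "r dvd n"
    by (metis dvd_trans gcd_dvd1 gcd_ge_0_int int_nat_eq of_nat_dvd_iff,
        metis dvd_trans gcd_dvd2 gcd_ge_0_int int_nat_eq of_nat_dvd_iff int_dvd_int_iff)
  then show False
    using assms \<open>prime r\<close> by (auto simp: in_prime_factors_iff)
qed

lemma exists_unit_difference:
  fixes X :: "nat set"
  assumes n: "prime_factors n = {p, q}" and "x0 \<in> X"
    and p: "\<exists>x\<in>X. \<not> [x = x0] (mod p)" and q: "\<exists>x\<in>X. \<not> [x = x0] (mod q)"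
  obtains x y where "x \<in> X" and "y \<in> X" and "x \<noteq> y" and "coprime (int x - int y) (int n)"
proof -
  have "\<exists>x\<in>X. \<exists>y\<in>X. \<not> int p dvd (int x - int y) \<and> \<not> int q dvd (int x - int y)"
    using one_class_if_differences_dvd_either[of "int ` X" "int p" "int q" "int x0"] \<open>x0 \<in> X\<close> p q
    by (auto simp: cong_iff_dvd_diff[symmetric] cong_int_iff)
  then obtain x y where "x \<in> X" "y \<in> X"
    and "\<not> int p dvd (int x - int y)" and "\<not> int q dvd (int x - int y)"
    by blast
  moreover have "n > 0"
    using n by (cases "n = 0") auto
  ultimately have "coprime (int x - int y) (int n)"
    using coprime_if_not_dvd_prime_factors[of n "int x - int y"] n by simp
  moreover have "x \<noteq> y"
    using \<open>\<not> int p dvd (int x - int y)\<close> by auto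
  ultimately show ?thesis
    using that \<open>x \<in> X\<close> \<open>y \<in> X\<close> by blast
qed

lemma exists_coprime_multiplier:
  fixes d e :: int
  assumes n: "n > 0" and "coprime d (int n)" and "coprime e (int n)"
  obtains t :: nat where "t > 0" and "coprime t n" and "[int t * d = e] (mod int n)"
proof -
  obtain u where u: "[d * u = 1] (mod int n)"
    using cong_solve_coprime_int assms(2) by blast
  then have "coprime (d * u) (int n)"
    using cong_imp_coprime cong_sym by (metis coprime_1_left)
  then have "coprime (u * e) (int n)"
    using assms(3) by simp
  \<comment> \<open>Adding n keeps t positive, also when n = 1.\<close>
  define t where "t = nat ((u * e) mod int n) + n"
  have t_cong: "[int t = u * e] (mod int n)"
    using n by (simp add: t_def cong_def)
  then have "coprime (int t) (int n)"
    using \<open>coprime (u * e) (int n)\<close> cong_imp_coprime cong_sym by blast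
  then have "coprime t n"
    by simp
  moreover have "t > 0"
    using n by (simp add: t_def)
  moreover have "[int t * d = e] (mod int n)"
  proof -
    have "[int t * d = (d * u) * e] (mod int n)"
      using cong_mult[OF t_cong cong_refl[of d]] by (simp add: ac_simps)
    also have "[(d * u) * e = 1 * e] (mod int n)"
      using cong_mult[OF u cong_refl[of e]] .
    finally show ?thesis
      by simp
  qed
  ultimately show ?thesis
    using that by blast
qed

lemma tiles_mod_unit_differences:
  assumes n: "n > 0" and T: "tiles_mod n A C"
    and a: "a1 \<in> A" "a2 \<in> A" and c: "c1 \<in> C" "c2 \<in> C"
    and "coprime (int a1 - int a2) (int n)" and "coprime (int c1 - int c2) (int n)"
  shows "a1 = a2 \<and> c1 = c2"
proof -
  obtain t where "t > 0" and "coprime t n" and t: "[int t * (int a1 - int a2) = int c1 - int c2] (mod int n)"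
    using exists_coprime_multiplier[OF n assms(7,8)] by blast
  have "[int (t * a1 + c2) = int (t * a2 + c1)] (mod int n)"
    using cong_add[OF t cong_refl[of "int t * int a2 + int c2"]] by (simp add: algebra_simps)
  then have "[t * a1 + c2 = t * a2 + c1] (mod n)"
    by (simp only: cong_int_iff)
  then have "t * a1 = t * a2 \<and> c2 = c1"
    using tiles_mod_unique[OF n tiles_mod_dilate_coprime[OF n T \<open>t > 0\<close> \<open>coprime t n\<close>]] a c
    by blast
  then show ?thesis
    using \<open>t > 0\<close> by simp
qed

theorem lemma3p3:
  fixes A :: "nat set" and n p q :: nat
  assumes "finite A" and "0 \<in> A"
    and "tiles_with_period (int ` A) n"
    and "prime p" and "prime q" and "p \<noteq> q"
    and "prime_factors n = {p, q}"
    and "\<not> cyclotomic_prime p dvd mask_poly A"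
    and "\<not> cyclotomic_prime q dvd mask_poly A"
  shows "(\<forall>a\<in>A. p dvd a) \<or> (\<forall>a\<in>A. q dvd a)"
proof (rule ccontr)
  assume not_one_class: "\<not> ?thesis"
  obtain C where n: "n > 0" and T: "tiles_mod n A C"
    using tiles_with_period_imp_tiles_mod[OF assms(3,1)] by blast
  obtain a1 a2 where a: "a1 \<in> A" "a2 \<in> A" "a1 \<noteq> a2" and "coprime (int a1 - int a2) (int n)"
    using exists_unit_difference[OF assms(7,2)] not_one_class by (auto simp: cong_0_iff)
  obtain c0 where c0: "c0 \<in> C"
    using tiles_mod_card[OF n T] n by fastforce
  have "p dvd n" and "q dvd n"
    using assms(7) by (auto simp: in_prime_factors_iff dest: equalityD2)
  then have "\<exists>c\<in>C. \<not> [c = c0] (mod p)" and "\<exists>c\<in>C. \<not> [c = c0] (mod q)"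
    using tiles_mod_one_class_imp_cyclotomic_dvd[OF n T _ c0] assms(8,9) by blast+
  then obtain c1 c2 where "c1 \<in> C" "c2 \<in> C" and "coprime (int c1 - int c2) (int n)"
    using exists_unit_difference[OF assms(7) c0] by blast
  then show False
    using tiles_mod_unit_differences[OF n T a(1,2)] \<open>coprime (int a1 - int a2) (int n)\<close> a(3) by blast
qed

end
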